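(* Let $\Gamma$ be a $\Bbbk$-algebra and $\sim$ an equivalence relation on $\mathrm{cfs}(\Gamma)$. If $V$ is a strong block module, then for each $B\in\mathrm{cfs}(\Gamma)/{\sim}$ there is a decomposition of $\Gamma$-modules $V=V(B)\oplus V'$ where $\mathfrak mV'=V'$ for all $\mathfrak m\in\mathcal W(B)$ and $\mathfrak mV(B)=0$ for some $\mathfrak m\in\mathcal W(B)$.
   Context: $\mathrm{cfs}(\Gamma)$: maximal two-sided ideals $\mathfrak m$ of $\Gamma$ with $\dim\Gamma/\mathfrak m<\infty$. For a class $B$, $\mathcal W(B)=\{\mathfrak m_1\cdots\mathfrak m_k:k\ge0,\mathfrak m_i\in B\}$; for a $\Gamma$-module $V$, $V(B)=\{v:\mathfrak mv=0$ for some $\mathfrak m\in\mathcal W(B)\}$. $V$ is a strong block module if $V=\bigoplus_BV(B)$ and for each $B$ there is $\mathfrak m\in\mathcal W(B)$ with $\mathfrak mV(B)=0$. *)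

theory Defs
  imports Complex_Main
begin

text \<open>A unital associative k-algebra: the ring structure is the type class ring_1 on 'a,
  the k-vector space structure is given by smul, and multiplication is k-bilinear.\<close>
definition k_algebra :: "('k::field \<Rightarrow> 'a::ring_1 \<Rightarrow> 'a) \<Rightarrow> bool" where
  "k_algebra smul \<longleftrightarrow> vector_space smul \<and>
     (\<forall>c x y. smul c (x * y) = smul c x * y \<and> smul c (x * y) = x * smul c y)"

definition two_sided_ideal :: "'a::ring_1 set \<Rightarrow> bool" where
  "two_sided_ideal I \<longleftrightarrow> 0 \<in> I \<and> (\<forall>x\<in>I. \<forall>y\<in>I. x + y \<in> I) \<and> (\<forall>x\<in>I. - x \<in> I)
     \<and> (\<forall>x\<in>I. \<forall>r. r * x \<in> I \<and> x * r \<in> I)"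

definition maximal_ideal :: "'a::ring_1 set \<Rightarrow> bool" where
  "maximal_ideal m \<longleftrightarrow> two_sided_ideal m \<and> m \<noteq> UNIV \<and>
     (\<forall>J. two_sided_ideal J \<and> m \<subseteq> J \<and> J \<noteq> UNIV \<longrightarrow> J = m)"

text \<open>dim (Gamma / m) < infinity: the quotient is spanned over k by the classes of
  finitely many elements.\<close>
definition finite_codim :: "('k::field \<Rightarrow> 'a::ring_1 \<Rightarrow> 'a) \<Rightarrow> 'a set \<Rightarrow> bool" where
  "finite_codim smul m \<longleftrightarrow> (\<exists>S. finite S \<and> (\<forall>x. \<exists>y \<in> module.span smul S. x - y \<in> m))"

definition cfs :: "('k::field \<Rightarrow> 'a::ring_1 \<Rightarrow> 'a) \<Rightarrow> 'a set set" where
  "cfs smul = {m. maximal_ideal m \<and> finite_codim smul m}"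

definition ideal_gen :: "'a::ring_1 set \<Rightarrow> 'a set" where
  "ideal_gen S = \<Inter>{I. two_sided_ideal I \<and> S \<subseteq> I}"

fun ideal_prod :: "'a::ring_1 set list \<Rightarrow> 'a set" where
  "ideal_prod [] = UNIV"
| "ideal_prod (m # ms) = ideal_gen {x * y | x y. x \<in> m \<and> y \<in> ideal_prod ms}"

definition W :: "'a::ring_1 set set \<Rightarrow> 'a set set" where
  "W B = {ideal_prod ms | ms. set ms \<subseteq> B}"

definition gamma_module :: "('a::ring_1 \<Rightarrow> 'v::ab_group_add \<Rightarrow> 'v) \<Rightarrow> bool" where
  "gamma_module act \<longleftrightarrow>
     (\<forall>a b v. act (a + b) v = act a v + act b v) \<and>
     (\<forall>a v w. act a (v + w) = act a v + act a w) \<and>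
     (\<forall>a b v. act (a * b) v = act a (act b v)) \<and>
     (\<forall>v. act 1 v = v)"

definition submodule :: "('a::ring_1 \<Rightarrow> 'v::ab_group_add \<Rightarrow> 'v) \<Rightarrow> 'v set \<Rightarrow> bool" where
  "submodule act U \<longleftrightarrow> 0 \<in> U \<and> (\<forall>u\<in>U. \<forall>w\<in>U. u + w \<in> U) \<and> (\<forall>a. \<forall>u\<in>U. act a u \<in> U)"

definition ideal_act :: "('a::ring_1 \<Rightarrow> 'v::ab_group_add \<Rightarrow> 'v) \<Rightarrow> 'a set \<Rightarrow> 'v set \<Rightarrow> 'v set" where
  "ideal_act act m U = \<Inter>{T. submodule act T \<and> {act a u | a u. a \<in> m \<and> u \<in> U} \<subseteq> T}"

definition block_part :: "('a::ring_1 \<Rightarrow> 'v::ab_group_add \<Rightarrow> 'v) \<Rightarrow> 'a set set \<Rightarrow> 'v set" where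
  "block_part act B = {v. \<exists>m \<in> W B. \<forall>a \<in> m. act a v = 0}"

definition strong_block_module ::
  "('a::ring_1 \<Rightarrow> 'v::ab_group_add \<Rightarrow> 'v) \<Rightarrow> 'a set set set \<Rightarrow> bool" where
  "strong_block_module act Blocks \<longleftrightarrow>
     (\<forall>v. \<exists>F f. finite F \<and> F \<subseteq> Blocks \<and> (\<forall>B\<in>F. f B \<in> block_part act B) \<and> v = sum f F) \<and>
     (\<forall>F f. finite F \<and> F \<subseteq> Blocks \<and> (\<forall>B\<in>F. f B \<in> block_part act B) \<and> sum f F = 0
        \<longrightarrow> (\<forall>B\<in>F. f B = 0)) \<and>
     (\<forall>B\<in>Blocks. \<exists>m \<in> W B. \<forall>a\<in>m. \<forall>v \<in> block_part act B. act a v = 0)"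

end

theory Submission
  imports Defs
begin

text \<open>Distinct maximal ideals are comaximal, hence so are any product of ideals from a class B and
  any product of ideals from a disjoint class C. Take for V' the sum of the V(C) with C \<noteq> B,
  and choose n \<in> W(C) annihilating V(C). Writing 1 = a + b with a \<in> m \<in> W(B) and b \<in> n gives
  v = a v for every v \<in> V(C), so V' \<subseteq> m V'. The complement property and the direct sum
  come straight from the strong block decomposition.\<close>

subsection \<open>Comaximal ideals\<close>

lemma two_sided_ideal_ideal_gen: "two_sided_ideal (ideal_gen S)"
  unfolding two_sided_ideal_def ideal_gen_def by auto

lemma subset_ideal_gen: "S \<subseteq> ideal_gen S"
  unfolding ideal_gen_def by auto

lemma two_sided_ideal_ideal_prod: "two_sided_ideal (ideal_prod ms)"
  using two_sided_ideal_ideal_gen by (cases ms) (auto simp: two_sided_ideal_def)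

lemma two_sided_ideal_sum:
  assumes I: "two_sided_ideal I" and J: "two_sided_ideal J"
  shows "two_sided_ideal {i + j | i j. i \<in> I \<and> j \<in> J}"
  unfolding two_sided_ideal_def
proof (intro conjI ballI allI)
  show "0 \<in> {i + j | i j. i \<in> I \<and> j \<in> J}"
    using I J unfolding two_sided_ideal_def by force
next
  fix x y assume "x \<in> {i + j | i j. i \<in> I \<and> j \<in> J}" "y \<in> {i + j | i j. i \<in> I \<and> j \<in> J}"
  then obtain i j i' j' where "x = i + j" "y = i' + j'" "i \<in> I" "i' \<in> I" "j \<in> J" "j' \<in> J"
    by blast
  with I J show "x + y \<in> {i + j | i j. i \<in> I \<and> j \<in> J}"
    unfolding two_sided_ideal_def
    by (intro CollectI exI[of _ "i + i'"] exI[of _ "j + j'"]) (auto simp: algebra_simps)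
next
  fix x assume "x \<in> {i + j | i j. i \<in> I \<and> j \<in> J}"
  then obtain i j where x: "x = i + j" "i \<in> I" "j \<in> J" by blast
  with I J show "- x \<in> {i + j | i j. i \<in> I \<and> j \<in> J}"
    unfolding two_sided_ideal_def by (intro CollectI exI[of _ "- i"] exI[of _ "- j"]) auto
  fix r
  from x I J show "r * x \<in> {i + j | i j. i \<in> I \<and> j \<in> J}"
    unfolding two_sided_ideal_def
    by (intro CollectI exI[of _ "r * i"] exI[of _ "r * j"]) (auto simp: algebra_simps)
  from x I J show "x * r \<in> {i + j | i j. i \<in> I \<and> j \<in> J}"
    unfolding two_sided_ideal_def
    by (intro CollectI exI[of _ "i * r"] exI[of _ "j * r"]) (auto simp: algebra_simps)
qed

definition comaximal :: "'a::ring_1 set \<Rightarrow> 'a set \<Rightarrow> bool" where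
  "comaximal I J \<longleftrightarrow> (\<exists>i\<in>I. \<exists>j\<in>J. i + j = 1)"

lemma comaximal_sym: "comaximal I J \<Longrightarrow> comaximal J I"
  unfolding comaximal_def by (metis add.commute)

lemma comaximal_maximal_ideals:
  assumes m: "maximal_ideal m" and n: "maximal_ideal n" and "m \<noteq> n"
  shows "comaximal m n"
proof -
  let ?J = "{i + j | i j. i \<in> m \<and> j \<in> n}"
  have ideals: "two_sided_ideal m" "two_sided_ideal n"
    using m n by (auto simp: maximal_ideal_def)
  have m_sub: "m \<subseteq> ?J"
  proof
    fix x assume "x \<in> m"
    then show "x \<in> ?J"
      using ideals(2) unfolding two_sided_ideal_def by (intro CollectI exI[of _ x] exI[of _ 0]) simp
  qed
  have n_sub: "n \<subseteq> ?J"
  proof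
    fix x assume "x \<in> n"
    then show "x \<in> ?J"
      using ideals(1) unfolding two_sided_ideal_def by (intro CollectI exI[of _ 0] exI[of _ x]) simp
  qed
  have "?J = UNIV"
  proof (rule ccontr)
    assume "?J \<noteq> UNIV"
    with m two_sided_ideal_sum[OF ideals] m_sub have "?J = m"
      unfolding maximal_ideal_def by blast
    with n_sub m n \<open>m \<noteq> n\<close> show False
      unfolding maximal_ideal_def by blast
  qed
  then have "1 \<in> ?J"
    by simp
  then show ?thesis
    unfolding comaximal_def by auto
qed

lemma comaximal_product:
  assumes I: "two_sided_ideal I" and "comaximal I J" "comaximal I K"
    and JK: "\<forall>x\<in>J. \<forall>y\<in>K. x * y \<in> P"
  shows "comaximal I P"
proof -
  obtain i j where ij: "i \<in> I" "j \<in> J" "i + j = 1"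
    using \<open>comaximal I J\<close> unfolding comaximal_def by blast
  obtain i' k where ik: "i' \<in> I" "k \<in> K" "i' + k = 1"
    using \<open>comaximal I K\<close> unfolding comaximal_def by blast
  have "1 = (i + j) * (i' + k)"
    using ij ik by simp
  also have "\<dots> = i * (i' + k) + (j * i' + j * k)"
    by (simp add: algebra_simps)
  also have "\<dots> = (i + j * i') + j * k"
    using ik(3) by (simp add: add.assoc)
  finally have "(i + j * i') + j * k = 1"
    by simp
  moreover have "i + j * i' \<in> I"
    using I ij ik unfolding two_sided_ideal_def by blast
  moreover have "j * k \<in> P"
    using JK ij ik by blast
  ultimately show ?thesis
    unfolding comaximal_def by blast
qed

lemma comaximal_ideal_prod:
  assumes I: "two_sided_ideal I" and "\<forall>n\<in>set ns. comaximal I n"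
  shows "comaximal I (ideal_prod ns)"
  using assms(2)
proof (induction ns)
  case Nil
  then show ?case
    using I unfolding comaximal_def two_sided_ideal_def by force
next
  case (Cons n ns)
  then have "comaximal I n" "comaximal I (ideal_prod ns)"
    by auto
  moreover have "\<forall>x\<in>n. \<forall>y\<in>ideal_prod ns. x * y \<in> ideal_prod (n # ns)"
    unfolding ideal_prod.simps by (intro ballI subsetD[OF subset_ideal_gen]) blast
  ultimately show ?case
    by (rule comaximal_product[OF I])
qed

lemma comaximal_W:
  assumes "B \<inter> C = {}" "\<forall>x\<in>B \<union> C. maximal_ideal x" "m \<in> W B" "n \<in> W C"
  shows "comaximal m n"
proof -
  obtain ms ns where m: "m = ideal_prod ms" "set ms \<subseteq> B" and n: "n = ideal_prod ns" "set ns \<subseteq> C"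
    using assms(3,4) unfolding W_def by blast
  have "comaximal (ideal_prod ns) x" if x: "x \<in> set ms" for x
  proof -
    have "comaximal x y" if "y \<in> set ns" for y
      using x that m(2) n(2) assms(1,2) by (intro comaximal_maximal_ideals) auto
    moreover have "two_sided_ideal x"
      using x m(2) assms(2) unfolding maximal_ideal_def by blast
    ultimately have "comaximal x (ideal_prod ns)"
      by (intro comaximal_ideal_prod) auto
    then show ?thesis
      by (rule comaximal_sym)
  qed
  then have "comaximal (ideal_prod ns) (ideal_prod ms)"
    by (intro comaximal_ideal_prod two_sided_ideal_ideal_prod) auto
  then show ?thesis
    unfolding m n by (rule comaximal_sym)
qed

lemma
  assumes "gamma_module act"
  shows gamma_module_add_left: "act (a + b) v = act a v + act b v"
    and gamma_module_add_right: "act a (v + w) = act a v + act a w"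
    and gamma_module_mult: "act (a * b) v = act a (act b v)"
    and gamma_module_one: "act 1 v = v"
  using assms unfolding gamma_module_def by auto

lemma gamma_module_zero_right: "gamma_module act \<Longrightarrow> act a 0 = 0"
  using gamma_module_add_right[of act a 0 0] by simp

lemma gamma_module_sum_right:
  "gamma_module act \<Longrightarrow> act a (sum f F) = (\<Sum>i\<in>F. act a (f i))"
  by (induction F rule: infinite_finite_induct)
    (simp_all add: gamma_module_zero_right gamma_module_add_right)

lemma submodule_uminus:
  assumes act: "gamma_module act" and U: "submodule act U" "u \<in> U"
  shows "- u \<in> U"
proof -
  have "act (- 1) u + u = act (- 1 + 1) u"
    by (simp only: gamma_module_add_left[OF act] gamma_module_one[OF act])
  also have "\<dots> = 0"
    using gamma_module_add_left[OF act, of 0 0 u] by simp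
  finally have "- u = act (- 1) u"
    by (metis add.commute minus_unique)
  then show ?thesis
    using U unfolding submodule_def by simp
qed

lemma submodule_sum: "submodule act T \<Longrightarrow> \<forall>i\<in>F. f i \<in> T \<Longrightarrow> sum f F \<in> T"
  by (induction F rule: infinite_finite_induct) (auto simp: submodule_def)

definition annihilator :: "('a::ring_1 \<Rightarrow> 'v::ab_group_add \<Rightarrow> 'v) \<Rightarrow> 'a set \<Rightarrow> 'v set" where
  "annihilator act m = {v. \<forall>a\<in>m. act a v = 0}"

lemma submodule_annihilator:
  assumes "gamma_module act" "two_sided_ideal m"
  shows "submodule act (annihilator act m)"
  using assms
  by (auto simp: submodule_def annihilator_def two_sided_ideal_def gamma_module_zero_right
      gamma_module_add_right simp flip: gamma_module_mult)

lemma submodule_ideal_act: "submodule act (ideal_act act m U)"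
  unfolding ideal_act_def submodule_def by (auto simp: Inter_iff)

lemma act_mem_ideal_act: "a \<in> m \<Longrightarrow> u \<in> U \<Longrightarrow> act a u \<in> ideal_act act m U"
  unfolding ideal_act_def by auto

lemma ideal_act_subset: "submodule act U \<Longrightarrow> ideal_act act m U \<subseteq> U"
  unfolding ideal_act_def by (rule Inter_lower) (auto simp: submodule_def)

lemma annihilator_comaximal_mem_ideal_act:
  assumes "gamma_module act" "comaximal m n" "v \<in> annihilator act n" "v \<in> U"
  shows "v \<in> ideal_act act m U"
proof -
  obtain a b where ab: "a \<in> m" "b \<in> n" "a + b = 1"
    using assms(2) unfolding comaximal_def by blast
  have "v = act (a + b) v"
    using assms(1) ab(3) by (simp add: gamma_module_one)
  also have "\<dots> = act a v"
    using assms(1,3) ab(2) by (simp add: gamma_module_add_left annihilator_def)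
  finally show ?thesis
    using ab(1) assms(4) act_mem_ideal_act by metis
qed

definition internal_sum :: "('i \<Rightarrow> 'v::comm_monoid_add set) \<Rightarrow> 'i set \<Rightarrow> 'v set" where
  "internal_sum U I = {sum f F | F f. finite F \<and> F \<subseteq> I \<and> (\<forall>i\<in>F. f i \<in> U i)}"

lemma sum_in_internal_sum:
  "finite F \<Longrightarrow> F \<subseteq> I \<Longrightarrow> \<forall>i\<in>F. f i \<in> U i \<Longrightarrow> sum f F \<in> internal_sum U I"
  unfolding internal_sum_def by blast

lemma subset_internal_sum: "i \<in> I \<Longrightarrow> U i \<subseteq> internal_sum U I"
proof
  fix x assume "i \<in> I" "x \<in> U i"
  then have "(\<Sum>j\<in>{i}. x) \<in> internal_sum U I"
    by (intro sum_in_internal_sum) auto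
  then show "x \<in> internal_sum U I"
    by simp
qed

lemma internal_sum_subset:
  assumes T: "submodule act T" and U: "\<forall>i\<in>I. U i \<subseteq> T"
  shows "internal_sum U I \<subseteq> T"
proof
  fix v assume "v \<in> internal_sum U I"
  then obtain F f where F: "F \<subseteq> I" "\<forall>i\<in>F. f i \<in> U i" and v: "v = sum f F"
    unfolding internal_sum_def by blast
  from F U have "\<forall>i\<in>F. f i \<in> T"
    by blast
  then show "v \<in> T"
    unfolding v by (rule submodule_sum[OF T])
qed

lemma submodule_internal_sum:
  assumes act: "gamma_module act" and U: "\<forall>i\<in>I. submodule act (U i)"
  shows "submodule act (internal_sum U I)"
  unfolding submodule_def
proof (intro conjI ballI allI)
  show "0 \<in> internal_sum U I"
    using sum_in_internal_sum[of "{}"] by simp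
next
  fix u w assume "u \<in> internal_sum U I" "w \<in> internal_sum U I"
  then obtain F f G g where FG: "finite F" "F \<subseteq> I" "\<forall>i\<in>F. f i \<in> U i" "u = sum f F"
      "finite G" "G \<subseteq> I" "\<forall>i\<in>G. g i \<in> U i" "w = sum g G"
    unfolding internal_sum_def by blast
  let ?f = "\<lambda>i. if i \<in> F then f i else 0" and ?g = "\<lambda>i. if i \<in> G then g i else 0"
  have "u + w = sum ?f (F \<union> G) + sum ?g (F \<union> G)"
    using FG by (simp flip: sum.inter_restrict add: Int_absorb1)
  also have "\<dots> = (\<Sum>i\<in>F \<union> G. ?f i + ?g i)"
    by (rule sum.distrib[symmetric])
  also have "\<dots> \<in> internal_sum U I"
    using FG U by (intro sum_in_internal_sum) (auto simp: submodule_def)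
  finally show "u + w \<in> internal_sum U I" .
next
  fix a u assume "u \<in> internal_sum U I"
  then obtain F f where F: "finite F" "F \<subseteq> I" "\<forall>i\<in>F. f i \<in> U i" "u = sum f F"
    unfolding internal_sum_def by blast
  then have "act a u = (\<Sum>i\<in>F. act a (f i))"
    using act by (simp add: gamma_module_sum_right)
  also have "\<dots> \<in> internal_sum U I"
    using F U by (intro sum_in_internal_sum) (auto simp: submodule_def)
  finally show "act a u \<in> internal_sum U I" .
qed

subsection \<open>Strong block modules\<close>

lemma
  assumes "strong_block_module act Blocks"
  shows strong_block_module_spanning:
      "\<exists>F f. finite F \<and> F \<subseteq> Blocks \<and> (\<forall>B\<in>F. f B \<in> block_part act B) \<and> v = sum f F"
    and strong_block_module_independent:
      "\<lbrakk>finite F; F \<subseteq> Blocks; \<forall>B\<in>F. f B \<in> block_part act B; sum f F = 0; B \<in> F\<rbrakk> \<Longrightarrow> f B = 0"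
    and strong_block_module_annihilated:
      "B \<in> Blocks \<Longrightarrow> \<exists>m\<in>W B. \<forall>a\<in>m. \<forall>v\<in>block_part act B. act a v = 0"
  using assms unfolding strong_block_module_def by (elim conjE; meson)+

lemma strong_block_module_annihilator:
  assumes "strong_block_module act Blocks" "B \<in> Blocks"
  obtains m where "m \<in> W B" "block_part act B = annihilator act m"
proof -
  obtain m where m: "m \<in> W B" "\<forall>a\<in>m. \<forall>v\<in>block_part act B. act a v = 0"
    using strong_block_module_annihilated[OF assms] by blast
  then have "block_part act B = annihilator act m"
    unfolding block_part_def annihilator_def by blast
  with m(1) show ?thesis
    by (rule that)
qed

lemma submodule_block_part:
  assumes "gamma_module act" "strong_block_module act Blocks" "B \<in> Blocks"
  shows "submodule act (block_part act B)"
proof -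
  obtain m where "m \<in> W B" "block_part act B = annihilator act m"
    using assms(2,3) by (rule strong_block_module_annihilator)
  then show ?thesis
    using assms(1) two_sided_ideal_ideal_prod submodule_annihilator unfolding W_def by auto
qed

lemma strong_block_module_decompose:
  assumes act: "gamma_module act" and sbm: "strong_block_module act Blocks" and B: "B \<in> Blocks"
  shows "\<exists>x\<in>block_part act B. \<exists>y\<in>internal_sum (block_part act) (Blocks - {B}). v = x + y"
proof -
  obtain F f where F: "finite F" "F \<subseteq> Blocks" "\<forall>C\<in>F. f C \<in> block_part act C"
    and v: "v = sum f F"
    using strong_block_module_spanning[OF sbm, of v] by auto
  have rest: "sum f (F - {B}) \<in> internal_sum (block_part act) (Blocks - {B})"
    using F by (intro sum_in_internal_sum) auto
  show ?thesis
  proof (cases "B \<in> F")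
    case True
    with F(1) have "v = f B + sum f (F - {B})"
      unfolding v by (rule sum.remove)
    then show ?thesis
      using True F(3) rest by blast
  next
    case False
    then have "v = 0 + sum f (F - {B})"
      unfolding v by simp
    moreover have "0 \<in> block_part act B"
      using submodule_block_part[OF act sbm B] unfolding submodule_def by blast
    ultimately show ?thesis
      using rest by blast
  qed
qed

lemma strong_block_module_inter:
  assumes act: "gamma_module act" and sbm: "strong_block_module act Blocks" and B: "B \<in> Blocks"
  shows "block_part act B \<inter> internal_sum (block_part act) (Blocks - {B}) = {0}"
    (is "block_part act B \<inter> ?V = {0}")
proof
  show "block_part act B \<inter> ?V \<subseteq> {0}"
  proof
    fix v assume v: "v \<in> block_part act B \<inter> ?V"
    then obtain F f where F: "finite F" "F \<subseteq> Blocks - {B}" "\<forall>C\<in>F. f C \<in> block_part act C"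
        "v = sum f F"
      unfolding internal_sum_def by blast
    let ?g = "f(B := - v)"
    have "B \<notin> F"
      using F(2) by blast
    have "sum ?g (insert B F) = ?g B + sum ?g F"
      using F(1) \<open>B \<notin> F\<close> by (rule sum.insert)
    also have "sum ?g F = sum f F"
      using \<open>B \<notin> F\<close> by (intro sum.cong) auto
    finally have "sum ?g (insert B F) = 0"
      using F(4) by simp
    moreover have "\<forall>C\<in>insert B F. ?g C \<in> block_part act C"
      using F(3) v submodule_uminus[OF act submodule_block_part[OF act sbm B]] by auto
    moreover have "finite (insert B F)" "insert B F \<subseteq> Blocks"
      using F(1,2) B by auto
    ultimately have "?g B = 0"
      using strong_block_module_independent[OF sbm] by blast
    then show "v \<in> {0}"
      by simp
  qed
  have "submodule act (block_part act B)" "submodule act ?V"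
    using act sbm B by (auto intro: submodule_block_part submodule_internal_sum)
  then show "{0} \<subseteq> block_part act B \<inter> ?V"
    unfolding submodule_def by blast
qed

lemma ideal_act_internal_sum_complement:
  assumes act: "gamma_module act" and sbm: "strong_block_module act Blocks" and B: "B \<in> Blocks"
    and disjoint: "\<forall>C\<in>Blocks. C \<noteq> B \<longrightarrow> B \<inter> C = {}"
    and maximal: "\<forall>C\<in>Blocks. \<forall>n\<in>C. maximal_ideal n"
    and m: "m \<in> W B"
  shows "ideal_act act m (internal_sum (block_part act) (Blocks - {B}))
           = internal_sum (block_part act) (Blocks - {B})" (is "ideal_act act m ?V = ?V")
proof
  show "ideal_act act m ?V \<subseteq> ?V"
    using act sbm by (intro ideal_act_subset submodule_internal_sum) (auto intro: submodule_block_part)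
next
  have "block_part act C \<subseteq> ideal_act act m ?V" if C: "C \<in> Blocks - {B}" for C
  proof -
    obtain n where n: "n \<in> W C" "block_part act C = annihilator act n"
      using sbm DiffD1[OF C] by (rule strong_block_module_annihilator)
    have "comaximal m n"
      using disjoint maximal B C m n(1) by (intro comaximal_W[of B C]) auto
    then show ?thesis
      using act n(2) subset_internal_sum[OF C] annihilator_comaximal_mem_ideal_act by blast
  qed
  then show "?V \<subseteq> ideal_act act m ?V"
    by (intro internal_sum_subset[OF submodule_ideal_act]) blast
qed

theorem mainTheorem17:
  fixes smul :: "'k::field \<Rightarrow> 'a::ring_1 \<Rightarrow> 'a"
    and R :: "('a set \<times> 'a set) set"
    and act :: "'a \<Rightarrow> 'v::ab_group_add \<Rightarrow> 'v"
  assumes "k_algebra smul"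
    and "equiv (cfs smul) R"
    and "gamma_module act"
    and "strong_block_module act (cfs smul // R)"
  shows "\<forall>B \<in> cfs smul // R. \<exists>V'.
           submodule act (block_part act B) \<and> submodule act V' \<and>
           block_part act B \<inter> V' = {0} \<and>
           (\<forall>v. \<exists>x \<in> block_part act B. \<exists>y \<in> V'. v = x + y) \<and>
           (\<forall>m \<in> W B. ideal_act act m V' = V') \<and>
           (\<exists>m \<in> W B. \<forall>a \<in> m. \<forall>v \<in> block_part act B. act a v = 0)"
proof
  fix B assume B: "B \<in> cfs smul // R"
  let ?V' = "internal_sum (block_part act) (cfs smul // R - {B})"
  have disjoint: "\<forall>C\<in>cfs smul // R. C \<noteq> B \<longrightarrow> B \<inter> C = {}"
    using quotient_disj[OF assms(2) B] by blast
  have maximal: "\<forall>C\<in>cfs smul // R. \<forall>n\<in>C. maximal_ideal n"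
    using in_quotient_imp_subset[OF assms(2)] unfolding cfs_def by blast
  have "submodule act (block_part act C)" if "C \<in> cfs smul // R" for C
    using assms(3,4) that by (rule submodule_block_part)
  then have "submodule act ?V'"
    using assms(3) by (intro submodule_internal_sum) auto
  moreover have "\<forall>m \<in> W B. ideal_act act m ?V' = ?V'"
    using ideal_act_internal_sum_complement[OF assms(3,4) B disjoint maximal] by blast
  moreover have "\<exists>m \<in> W B. \<forall>a \<in> m. \<forall>v \<in> block_part act B. act a v = 0"
    using assms(4) B by (rule strong_block_module_annihilated)
  ultimately show "\<exists>V'. submodule act (block_part act B) \<and> submodule act V' \<and>
           block_part act B \<inter> V' = {0} \<and>
           (\<forall>v. \<exists>x \<in> block_part act B. \<exists>y \<in> V'. v = x + y) \<and>
           (\<forall>m \<in> W B. ideal_act act m V' = V') \<and>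
           (\<exists>m \<in> W B. \<forall>a \<in> m. \<forall>v \<in> block_part act B. act a v = 0)"
    using submodule_block_part[OF assms(3,4) B] strong_block_module_inter[OF assms(3,4) B]
      strong_block_module_decompose[OF assms(3,4) B] by blast
qed

end
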